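(* Let $n \ge 1$ and $N = 2^n$. Let $B_0(N) = \pi_N^{-1}\left(\left\{\begin{pmatrix} * & * \\ 0 & * \end{pmatrix}\right\}\right) \subseteq \mathrm{GL}_2(\hat{\mathbb{Z}})$ be the Borel subgroup of level $N$ and $C_{ns}(N)$ the nonsplit Cartan subgroup of level $N$. Then $B_0(N)$ and $C_{ns}(N)$ are independent in $\mathrm{GL}_2(\hat{\mathbb{Z}})$, i.e. $[\mathrm{GL}_2(\hat{\mathbb{Z}}):B_0(N)\cap C_{ns}(N)] = [\mathrm{GL}_2(\hat{\mathbb{Z}}):B_0(N)]\,[\mathrm{GL}_2(\hat{\mathbb{Z}}):C_{ns}(N)]$; but for $n>1$ they are not geometrically independent, i.e. for $n > 1$, $[\mathrm{SL}_2(\hat{\mathbb{Z}}):B_0(N)\cap C_{ns}(N)\cap\mathrm{SL}_2(\hat{\mathbb{Z}})] \neq [\mathrm{SL}_2(\hat{\mathbb{Z}}):B_0(N)\cap\mathrm{SL}_2(\hat{\mathbb{Z}})]\,[\mathrm{SL}_2(\hat{\mathbb{Z}}):C_{ns}(N)\cap\mathrm{SL}_2(\hat{\mathbb{Z}})]$.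
   Context: $\hat{\mathbb{Z}} = \varprojlim_N \mathbb{Z}/N\mathbb{Z}$ and $\pi_N:\mathrm{GL}_2(\hat{\mathbb{Z}})\to \mathrm{GL}_2(\mathbb{Z}/N\mathbb{Z})$ is reduction. Nonsplit Cartan subgroup: let $R$ be an imaginary quadratic order in which every prime dividing $N$ (here, $2$) is inert, with an optimal embedding $\iota: R \to M_2(\mathbb{Z})$ and its reduction $\iota_N: R \to M_2(\mathbb{Z}/N\mathbb{Z})$; then $C_{ns}(N) = \pi_N^{-1}(\iota_N(R)^* )$, which is well defined up to conjugation in $\mathrm{GL}_2(\hat{\mathbb{Z}})$. *)

theory Defs
  imports "HOL-Analysis.Analysis" "HOL-Algebra.Coset" "HOL-Number_Theory.Cong"
begin

text \<open>Integer 2x2 matrices; reduction of entries modulo N (representatives in 0..N-1),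
  so that M2(Z/NZ) is modelled by matrices with entries in {0..<N}.\<close>

definition red :: "nat \<Rightarrow> int^2^2 \<Rightarrow> int^2^2" where
  "red N A = (\<chi> i j. A $ i $ j mod int N)"

text \<open>M2(Zhat) = inverse limit of the M2(Z/NZ): compatible families (g N)_{N>0},
  normalised by g 0 = 0.\<close>

definition Mhat :: "(nat \<Rightarrow> int^2^2) set" where
  "Mhat = {g. g 0 = 0 \<and> (\<forall>N M. 0 < N \<and> 0 < M \<and> N dvd M \<longrightarrow> red N (g M) = g N)}"

definition hmul :: "(nat \<Rightarrow> int^2^2) \<Rightarrow> (nat \<Rightarrow> int^2^2) \<Rightarrow> (nat \<Rightarrow> int^2^2)" where
  "hmul g h = (\<lambda>N. if N = 0 then 0 else red N (g N ** h N))"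

definition hone :: "nat \<Rightarrow> int^2^2" where
  "hone = (\<lambda>N. if N = 0 then 0 else red N (mat 1))"

text \<open>GL2(Zhat): determinant is a unit in Zhat, i.e. a unit modulo every N.\<close>

definition GL2hat_set :: "(nat \<Rightarrow> int^2^2) set" where
  "GL2hat_set = {g \<in> Mhat. \<forall>N>0. coprime (det (g N)) (int N)}"

definition SL2hat_set :: "(nat \<Rightarrow> int^2^2) set" where
  "SL2hat_set = {g \<in> GL2hat_set. \<forall>N>0. [det (g N) = 1] (mod int N)}"

definition GL2hat :: "(nat \<Rightarrow> int^2^2) monoid" where
  "GL2hat = \<lparr>carrier = GL2hat_set, mult = hmul, one = hone\<rparr>"

definition SL2hat :: "(nat \<Rightarrow> int^2^2) monoid" where
  "SL2hat = \<lparr>carrier = SL2hat_set, mult = hmul, one = hone\<rparr>"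

definition subgroup_index :: "('a, 'b) monoid_scheme \<Rightarrow> 'a set \<Rightarrow> nat" where
  "subgroup_index G H = card (rcosets\<^bsub>G\<^esub> H)"

definition B0 :: "nat \<Rightarrow> (nat \<Rightarrow> int^2^2) set" where
  "B0 N = {g \<in> GL2hat_set. g N $ 2 $ 1 = 0}"

text \<open>An imaginary quadratic order R with an optimal embedding iota : R \<rightarrow> M2(Z) is
  recorded by T = iota(tau) where R = Z[tau]; then iota(R) = Z[T] = {a I + b T}.
  Imaginary quadratic: the characteristic polynomial of T has negative discriminant.
  Optimal: iota(K) \<inter> M2(Z) = iota(R), i.e. (a I + b T)/m integral implies m | a, m | b.\<close>

definition imag_quad_optimal :: "int^2^2 \<Rightarrow> bool" where
  "imag_quad_optimal T \<longleftrightarrow>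
     (T$1$1 + T$2$2)^2 - 4 * det T < 0 \<and>
     (\<forall>a b m::int. m > 0 \<and> (\<forall>i j. m dvd (mat a + mat b ** T) $ i $ j) \<longrightarrow> m dvd a \<and> m dvd b)"

text \<open>p is inert in R = Z[T]: R/pR is a field, i.e. every nonzero element a + b tau
  (a, b not both divisible by p) is a unit mod p.\<close>

definition inert_at :: "int \<Rightarrow> int^2^2 \<Rightarrow> bool" where
  "inert_at p T \<longleftrightarrow>
     (\<forall>a b::int. \<not> (p dvd a \<and> p dvd b) \<longrightarrow> coprime (det (mat a + mat b ** T)) p)"

text \<open>Nonsplit Cartan of level N: preimage under reduction mod N of iota_N(R)^*.\<close>

definition Cns :: "nat \<Rightarrow> int^2^2 \<Rightarrow> (nat \<Rightarrow> int^2^2) set" where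
  "Cns N T = {g \<in> GL2hat_set. \<exists>a b::int.
      coprime (det (mat a + mat b ** T)) (int N) \<and> g N = red N (mat a + mat b ** T)}"

end

theory Submission
  imports Defs "HOL-Number_Theory.Number_Theory"
begin

text \<open>
  For subgroups B, C of a group G, the right cosets of B \<inter> C correspond to the image of
  x \<mapsto> (B x, C x) in (B\<setminus>G) \<times> (C\<setminus>G), so the index of B \<inter> C is multiplicative exactly when
  G = C B, i.e. when every g has some c \<in> C with c g \<in> B.  Both subgroups have level
  N = 2^n, so everything happens modulo N.

  In GL2: if (p, q) is the first column of g modulo N, take X = a + b T with second row
  T21 (q, -p).  Since 2 is inert in Z[T], the determinant of X is odd, so X lifts to
  C_ns(N) (using the idempotent of Zhat that cuts out Z_2) and X g is upper triangular.

  In SL2 the element c must moreover have determinant 1 modulo 4.  For g = [[1,0],[2,1]],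
  (X g)21 \<equiv> 0 (mod 4) forces b = 2 c with a \<equiv> c odd, and then
  det X = a^2 + a b tr T + b^2 det T \<equiv> 1 + 2 tr T \<equiv> 3 (mod 4), as tr T is odd.
\<close>


section \<open>Index of an intersection of subgroups\<close>

lemma card_image_eq_if_same_fibres:
  assumes "\<And>x y. x \<in> A \<Longrightarrow> y \<in> A \<Longrightarrow> f x = f y \<longleftrightarrow> g x = g y"
  shows "card (f ` A) = card (g ` A)"
proof -
  let ?h = "\<lambda>X. g (inv_into A f X)"
  have h: "?h (f x) = g x" if "x \<in> A" for x
    using assms[OF inv_into_into[of "f x" f A] that] that by (simp add: f_inv_into_f)
  have "inj_on ?h (f ` A)"
    by (rule inj_onI) (auto simp: h assms)
  moreover have "?h ` f ` A = g ` A"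
    by (auto simp: image_image h)
  ultimately show ?thesis
    by (metis card_image)
qed

lemma (in group) rcos_eq_iff:
  assumes "subgroup H G" "x \<in> carrier G" "y \<in> carrier G"
  shows "H #> x = H #> y \<longleftrightarrow> x \<otimes> inv y \<in> H"
  using assms repr_independence repr_independenceD subgroup.rcos_module[OF assms(1) is_group]
  by metis

lemma (in group) rcosets_eq_image: "rcosets H = (\<lambda>x. H #> x) ` carrier G"
  unfolding RCOSETS_def by blast

lemma (in group) card_rcosets_Int:
  assumes "subgroup B G" "subgroup C G"
  shows "card (rcosets (B \<inter> C)) = card ((\<lambda>x. (B #> x, C #> x)) ` carrier G)"
  unfolding rcosets_eq_image
  by (rule card_image_eq_if_same_fibres)
    (simp add: rcos_eq_iff subgroups_Inter_pair assms)

lemma (in group) rcoset_pair_in_image: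
  assumes B: "subgroup B G" and C: "subgroup C G"
    and factor: "\<forall>g \<in> carrier G. \<exists>c \<in> C. c \<otimes> g \<in> B"
    and x: "x \<in> carrier G" and y: "y \<in> carrier G"
  shows "(B #> x, C #> y) \<in> (\<lambda>x. (B #> x, C #> x)) ` carrier G"
proof -
  obtain c where c: "c \<in> C" "c \<otimes> (y \<otimes> inv x) \<in> B"
    using factor x y by blast
  have cG: "c \<in> carrier G"
    using c(1) C subgroup.mem_carrier by metis
  have "c \<otimes> y \<otimes> inv x \<in> B" "c \<otimes> y \<otimes> inv y \<in> C"
    using c x y cG by (simp_all add: m_assoc)
  then have "B #> (c \<otimes> y) = B #> x" "C #> (c \<otimes> y) = C #> y"
    using rcos_eq_iff[OF B m_closed[OF cG y] x] rcos_eq_iff[OF C m_closed[OF cG y] y]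
    by blast+
  then show ?thesis
    using m_closed[OF cG y] by (intro image_eqI[where x = "c \<otimes> y"]) simp_all
qed

lemma (in group) rcoset_pairs_eq_iff:
  assumes B: "subgroup B G" and C: "subgroup C G"
  shows "(\<lambda>x. (B #> x, C #> x)) ` carrier G = (rcosets B) \<times> (rcosets C)
           \<longleftrightarrow> (\<forall>g \<in> carrier G. \<exists>c \<in> C. c \<otimes> g \<in> B)"
proof
  assume onto: "(\<lambda>x. (B #> x, C #> x)) ` carrier G = (rcosets B) \<times> (rcosets C)"
  show "\<forall>g \<in> carrier G. \<exists>c \<in> C. c \<otimes> g \<in> B"
  proof
    fix g assume g: "g \<in> carrier G"
    have "(B #> \<one>, C #> g) \<in> (rcosets B) \<times> (rcosets C)"
      using g by (auto simp: rcosets_eq_image)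
    then obtain z where z: "z \<in> carrier G" "B #> z = B #> \<one>" "C #> z = C #> g"
      unfolding onto[symmetric] by auto
    have "z \<in> B" "z \<otimes> inv g \<in> C"
      using rcos_eq_iff[OF B z(1) one_closed] rcos_eq_iff[OF C z(1) g] z(1,2,3) by simp_all
    moreover have "z \<otimes> inv g \<otimes> g = z"
      using z(1) g by (simp add: m_assoc)
    ultimately show "\<exists>c \<in> C. c \<otimes> g \<in> B" by metis
  qed
next
  assume "\<forall>g \<in> carrier G. \<exists>c \<in> C. c \<otimes> g \<in> B"
  then have "(rcosets B) \<times> (rcosets C) \<subseteq> (\<lambda>x. (B #> x, C #> x)) ` carrier G"
    unfolding rcosets_eq_image using rcoset_pair_in_image[OF B C] by blast
  moreover have "(\<lambda>x. (B #> x, C #> x)) ` carrier G \<subseteq> (rcosets B) \<times> (rcosets C)"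
    unfolding rcosets_eq_image by blast
  ultimately show "(\<lambda>x. (B #> x, C #> x)) ` carrier G = (rcosets B) \<times> (rcosets C)"
    by blast
qed

lemma (in group) card_rcosets_Int_eq_mult_iff:
  assumes "subgroup B G" "subgroup C G" "finite (rcosets B)" "finite (rcosets C)"
  shows "card (rcosets (B \<inter> C)) = card (rcosets B) * card (rcosets C)
           \<longleftrightarrow> (\<forall>g \<in> carrier G. \<exists>c \<in> C. c \<otimes> g \<in> B)"
proof -
  have sub: "(\<lambda>x. (B #> x, C #> x)) ` carrier G \<subseteq> (rcosets B) \<times> (rcosets C)"
    unfolding rcosets_eq_image by blast
  have "card ((\<lambda>x. (B #> x, C #> x)) ` carrier G) = card ((rcosets B) \<times> (rcosets C))
      \<longleftrightarrow> (\<lambda>x. (B #> x, C #> x)) ` carrier G = (rcosets B) \<times> (rcosets C)"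
    using card_subset_eq[OF finite_cartesian_product[OF assms(3,4)] sub] by auto
  then show ?thesis
    by (simp only: card_rcosets_Int[OF assms(1,2)] rcoset_pairs_eq_iff[OF assms(1,2)] card_cartesian_product)
qed

lemma (in group) finite_rcosets_if_fibres_in:
  assumes H: "subgroup H G" and fin: "finite (f ` carrier G)"
    and fibres: "\<And>x y. x \<in> carrier G \<Longrightarrow> y \<in> carrier G \<Longrightarrow> f x = f y \<Longrightarrow> x \<otimes> inv y \<in> H"
  shows "finite (rcosets H)"
proof -
  let ?rep = "inv_into (carrier G) f"
  have "H #> x = H #> ?rep (f x)" if x: "x \<in> carrier G" for x
  proof -
    have "?rep (f x) \<in> carrier G" "f (?rep (f x)) = f x"
      using x by (auto intro: inv_into_into f_inv_into_f)
    then show ?thesis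
      using rcos_eq_iff[OF H x] fibres x by metis
  qed
  then have "rcosets H \<subseteq> (\<lambda>X. H #> ?rep X) ` f ` carrier G"
    unfolding rcosets_eq_image by blast
  then show ?thesis
    using fin finite_subset by blast
qed

section \<open>Integer 2x2 matrices modulo N\<close>

type_synonym m2 = "int^2^2"

lemma m2_mult_nth: "((A::m2) ** B) $ i $ j = A$i$1 * B$1$j + A$i$2 * B$2$j"
  by (simp add: matrix_matrix_mult_def sum_2)

lemma m2_eq_iff:
  "(A::m2) = B \<longleftrightarrow> A$1$1 = B$1$1 \<and> A$1$2 = B$1$2 \<and> A$2$1 = B$2$1 \<and> A$2$2 = B$2$2"
  by (auto simp: vec_eq_iff forall_2)

lemma mat_nth [simp]:
  "(mat a :: m2)$1$1 = a" "(mat a :: m2)$1$2 = 0" "(mat a :: m2)$2$1 = 0" "(mat a :: m2)$2$2 = a"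
  by (simp_all add: mat_def)

lemma red_nth [simp]: "red N A $ i $ j = A $ i $ j mod int N"
  by (simp add: red_def)

lemma red_idem: "red N (red N A) = red N A"
  by (simp add: red_def vec_eq_iff)

lemma red_red_dvd: "N dvd M \<Longrightarrow> red N (red M A) = red N A"
  by (simp add: red_def vec_eq_iff mod_mod_cancel)

definition m2_cong :: "nat \<Rightarrow> m2 \<Rightarrow> m2 \<Rightarrow> bool" where
  "m2_cong N A B \<longleftrightarrow> (\<forall>i j. [A$i$j = B$i$j] (mod int N))"

lemma m2_cong_iff:
  "m2_cong N A B \<longleftrightarrow> [A$1$1 = B$1$1] (mod int N) \<and> [A$1$2 = B$1$2] (mod int N)
      \<and> [A$2$1 = B$2$1] (mod int N) \<and> [A$2$2 = B$2$2] (mod int N)"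
  by (auto simp: m2_cong_def forall_2)

lemma red_eq_iff_m2_cong: "red N A = red N B \<longleftrightarrow> m2_cong N A B"
  by (simp add: m2_eq_iff m2_cong_iff cong_def)

lemma m2_cong_red: "m2_cong N (red N A) A"
  by (simp add: m2_cong_def cong_def)

lemma m2_cong_refl [simp]: "m2_cong N A A"
  by (simp add: m2_cong_def)

lemma m2_cong_mult: "m2_cong N A A' \<Longrightarrow> m2_cong N B B' \<Longrightarrow> m2_cong N (A ** B) (A' ** B')"
  unfolding m2_cong_iff m2_mult_nth by (intro conjI cong_add cong_mult; simp)

lemma m2_cong_add: "m2_cong N A A' \<Longrightarrow> m2_cong N B B' \<Longrightarrow> m2_cong N (A + B) (A' + B')"
  unfolding m2_cong_def by (simp add: cong_add)

lemma m2_cong_mat: "[a = b] (mod int N) \<Longrightarrow> m2_cong N (mat a) (mat b)"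
  unfolding m2_cong_iff by simp

lemma m2_cong_det: "m2_cong N A B \<Longrightarrow> [det A = det B] (mod int N)"
  unfolding m2_cong_iff det_2 by (intro cong_diff cong_mult; simp)

lemma det_red_cong: "[det (red N A) = det A] (mod int N)"
  by (rule m2_cong_det[OF m2_cong_red])

lemma red_mult_red_left: "red N (red N A ** B) = red N (A ** B)"
  by (simp add: red_eq_iff_m2_cong m2_cong_mult m2_cong_red)

lemma red_mult_red_right: "red N (A ** red N B) = red N (A ** B)"
  by (simp add: red_eq_iff_m2_cong m2_cong_mult m2_cong_red)

definition adjugate :: "m2 \<Rightarrow> m2" where
  "adjugate A = (\<chi> i j. if i = 1 then (if j = 1 then A$2$2 else - A$1$2)
                         else (if j = 1 then - A$2$1 else A$1$1))"

lemma adjugate_nth [simp]: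
  "adjugate A $1$1 = A$2$2" "adjugate A $1$2 = - A$1$2"
  "adjugate A $2$1 = - A$2$1" "adjugate A $2$2 = A$1$1"
  by (simp_all add: adjugate_def)

lemma adjugate_mult: "adjugate A ** A = mat (det A)"
  by (simp add: m2_eq_iff m2_mult_nth det_2 algebra_simps)

lemma m2_cong_adjugate: "m2_cong N A B \<Longrightarrow> m2_cong N (adjugate A) (adjugate B)"
  unfolding m2_cong_iff by (simp add: cong_minus_minus_iff)

lemma det_adjugate: "det (adjugate A) = det A"
  by (simp add: det_2 algebra_simps)

lemma det_mat: "det (mat u :: m2) = u * u"
  by (simp add: det_2)

lemma mat_mult_mat: "(mat a :: m2) ** mat b = mat (a * b)"
  by (simp add: m2_eq_iff m2_mult_nth)

section \<open>The groups GL2(Zhat) and SL2(Zhat)\<close>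

lemma Mhat_red: "g \<in> Mhat \<Longrightarrow> 0 < N \<Longrightarrow> red N (g N) = g N"
  unfolding Mhat_def by auto

lemma Mhat_m2_cong: "g \<in> Mhat \<Longrightarrow> 0 < N \<Longrightarrow> 0 < M \<Longrightarrow> N dvd M \<Longrightarrow> m2_cong N (g M) (g N)"
  unfolding Mhat_def by (metis (mono_tags, lifting) mem_Collect_eq red_eq_iff_m2_cong red_idem)

lemma MhatI:
  "g 0 = 0 \<Longrightarrow> (\<And>N M. 0 < N \<Longrightarrow> 0 < M \<Longrightarrow> N dvd M \<Longrightarrow> red N (g M) = g N) \<Longrightarrow> g \<in> Mhat"
  unfolding Mhat_def by auto

lemma GL2hat_set_D:
  "g \<in> GL2hat_set \<Longrightarrow> g \<in> Mhat"
  "g \<in> GL2hat_set \<Longrightarrow> 0 < N \<Longrightarrow> coprime (det (g N)) (int N)"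
  unfolding GL2hat_set_def by auto

lemma hmul_level: "0 < N \<Longrightarrow> hmul g h N = red N (g N ** h N)"
  by (simp add: hmul_def)

lemma hone_level: "0 < N \<Longrightarrow> hone N = red N (mat 1)"
  by (simp add: hone_def)

lemma det_hmul_cong: "0 < N \<Longrightarrow> [det (hmul g h N) = det (g N) * det (h N)] (mod int N)"
  by (simp add: hmul_level det_red_cong det_mul[symmetric])

lemma det_hone_cong: "0 < N \<Longrightarrow> [det (hone N) = 1] (mod int N)"
  using det_red_cong[of N "mat 1"] by (simp add: hone_level)

lemma hmul_Mhat: "g \<in> Mhat \<Longrightarrow> h \<in> Mhat \<Longrightarrow> hmul g h \<in> Mhat"
proof (rule MhatI)
  fix N M :: nat assume g: "g \<in> Mhat" and h: "h \<in> Mhat" and NM: "0 < N" "0 < M" "N dvd M"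
  have "red N (hmul g h M) = red N (g M ** h M)"
    using NM by (simp add: hmul_level red_red_dvd)
  also have "\<dots> = red N (g N ** h N)"
    unfolding red_eq_iff_m2_cong by (intro m2_cong_mult Mhat_m2_cong g h NM)
  finally show "red N (hmul g h M) = hmul g h N"
    using NM by (simp add: hmul_level)
qed (simp add: hmul_def)

lemma hone_Mhat: "hone \<in> Mhat"
  by (rule MhatI) (auto simp: hone_def red_red_dvd)

lemma hmul_assoc: "hmul (hmul g h) k = hmul g (hmul h k)"
  by (rule ext) (simp add: hmul_def red_mult_red_left red_mult_red_right matrix_mul_assoc[symmetric])

lemma hone_hmul: "g \<in> Mhat \<Longrightarrow> hmul hone g = g"
  by (rule ext) (auto simp: hmul_def hone_def red_mult_red_left Mhat_red Mhat_def)

definition inverse_mod :: "int \<Rightarrow> nat \<Rightarrow> int" where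
  "inverse_mod d N = (SOME u. [d * u = 1] (mod int N))"

lemma mult_inverse_mod_cong: "coprime d (int N) \<Longrightarrow> [d * inverse_mod d N = 1] (mod int N)"
  unfolding inverse_mod_def by (rule someI_ex) (rule cong_solve_coprime_int)

definition hinv :: "(nat \<Rightarrow> m2) \<Rightarrow> nat \<Rightarrow> m2" where
  "hinv g = (\<lambda>N. if N = 0 then 0 else red N (mat (inverse_mod (det (g N)) N) ** adjugate (g N)))"

lemma hmul_hinv_level:
  assumes "g \<in> GL2hat_set" "0 < N"
  shows "hmul (hinv g) g N = hone N"
proof -
  let ?u = "inverse_mod (det (g N)) N"
  have "hmul (hinv g) g N = red N (mat ?u ** adjugate (g N) ** g N)"
    using assms by (simp add: hmul_level hinv_def red_mult_red_left)
  also have "\<dots> = red N (mat (?u * det (g N)))"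
    by (simp add: matrix_mul_assoc[symmetric] adjugate_mult mat_mult_mat)
  also have "\<dots> = red N (mat 1)"
    unfolding red_eq_iff_m2_cong using mult_inverse_mod_cong[OF GL2hat_set_D(2)[OF assms]]
    by (intro m2_cong_mat) (simp add: mult.commute)
  finally show ?thesis
    using assms by (simp add: hone_level)
qed

lemma hinv_Mhat:
  assumes g: "g \<in> GL2hat_set"
  shows "hinv g \<in> Mhat"
proof (rule MhatI)
  fix N M :: nat assume NM: "0 < N" "0 < M" "N dvd M"
  let ?uM = "inverse_mod (det (g M)) M" and ?uN = "inverse_mod (det (g N)) N"
  have gN: "m2_cong N (g M) (g N)"
    using g NM by (simp add: GL2hat_set_def Mhat_m2_cong)
  have "[det (g N) * ?uM = det (g M) * ?uM] (mod int N)"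
    using m2_cong_det[OF gN] by (simp add: cong_sym cong_scalar_right)
  also have "[det (g M) * ?uM = 1] (mod int N)"
    using mult_inverse_mod_cong[OF GL2hat_set_D(2)[OF g NM(2)]] NM(3) by (meson cong_dvd_modulus int_dvd_int_iff)
  also have "[1 = det (g N) * ?uN] (mod int N)"
    using mult_inverse_mod_cong[OF GL2hat_set_D(2)[OF g NM(1)]] by (simp add: cong_sym)
  finally have "[?uM = ?uN] (mod int N)"
    using GL2hat_set_D(2)[OF g NM(1)] by (simp add: cong_mult_lcancel)
  then have "red N (mat ?uM ** adjugate (g M)) = red N (mat ?uN ** adjugate (g N))"
    unfolding red_eq_iff_m2_cong by (intro m2_cong_mult m2_cong_mat m2_cong_adjugate gN)
  then show "red N (hinv g M) = hinv g N"
    using NM by (simp add: hinv_def red_red_dvd)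
qed (simp add: hinv_def)

lemma det_hinv_cong:
  assumes "g \<in> GL2hat_set" "0 < N"
  shows "[det (hinv g N) * det (g N) = 1] (mod int N)"
  using det_hmul_cong[OF assms(2), of "hinv g" g] det_hone_cong[OF assms(2)] hmul_hinv_level[OF assms]
  by (metis cong_sym cong_trans)

lemma hinv_GL2hat:
  assumes "g \<in> GL2hat_set"
  shows "hinv g \<in> GL2hat_set"
  unfolding GL2hat_set_def using hinv_Mhat[OF assms] det_hinv_cong[OF assms]
  by (auto simp: coprime_iff_invertible_int)

lemma hmul_GL2hat:
  assumes "g \<in> GL2hat_set" "h \<in> GL2hat_set"
  shows "hmul g h \<in> GL2hat_set"
proof -
  have "coprime (det (hmul g h N)) (int N)" if "0 < N" for N
    using det_hmul_cong[OF that, of g h] GL2hat_set_D(2)[OF assms(1) that] GL2hat_set_D(2)[OF assms(2) that]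
    by (metis cong_imp_coprime cong_sym coprime_mult_left_iff)
  then show ?thesis
    using assms hmul_Mhat unfolding GL2hat_set_def by auto
qed

lemma coprime_if_cong_1: "[a = 1] (mod m) \<Longrightarrow> coprime (a::int) m"
  by (metis cong_imp_coprime cong_sym coprime_1_left)

lemma hone_GL2hat: "hone \<in> GL2hat_set"
  unfolding GL2hat_set_def using hone_Mhat det_hone_cong coprime_if_cong_1 by auto

lemma hmul_hinv: "g \<in> GL2hat_set \<Longrightarrow> hmul (hinv g) g = hone"
  using hmul_hinv_level by (intro ext) (auto simp: hmul_def hone_def)

lemma GL2hat_simps [simp]:
  "carrier GL2hat = GL2hat_set" "mult GL2hat = hmul" "one GL2hat = hone"
  by (simp_all add: GL2hat_def)

lemma group_GL2hat: "group GL2hat"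
proof (rule groupI)
  fix x assume "x \<in> carrier GL2hat"
  then show "\<exists>y\<in>carrier GL2hat. y \<otimes>\<^bsub>GL2hat\<^esub> x = \<one>\<^bsub>GL2hat\<^esub>"
    using hinv_GL2hat hmul_hinv by (intro bexI[of _ "hinv x"]) auto
qed (auto simp: hmul_GL2hat hone_GL2hat hmul_assoc hone_hmul GL2hat_set_D(1))

lemma inv_GL2hat: "g \<in> GL2hat_set \<Longrightarrow> inv\<^bsub>GL2hat\<^esub> g = hinv g"
  using group.inv_equality[OF group_GL2hat, of "hinv g" g] by (simp add: hinv_GL2hat hmul_hinv)

lemma hmul_hinv_level_eq:
  assumes "x \<in> GL2hat_set" "y \<in> GL2hat_set" "0 < N" "x N = y N"
  shows "hmul x (hinv y) N = hone N"
proof -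
  have "hmul y (hinv y) = hone"
    using group.r_inv[OF group_GL2hat, of y] assms(2) by (simp add: inv_GL2hat)
  then show ?thesis
    using assms(3,4) by (metis hmul_level)
qed

lemma SL2hat_set_D:
  "g \<in> SL2hat_set \<Longrightarrow> g \<in> GL2hat_set"
  "g \<in> SL2hat_set \<Longrightarrow> 0 < N \<Longrightarrow> [det (g N) = 1] (mod int N)"
  unfolding SL2hat_set_def by auto

lemma subgroup_SL2hat: "subgroup SL2hat_set GL2hat"
proof (rule group.subgroupI[OF group_GL2hat])
  show "SL2hat_set \<noteq> {}"
    using hone_GL2hat det_hone_cong unfolding SL2hat_set_def by blast
next
  fix g assume g: "g \<in> SL2hat_set"
  have "[det (hinv g N) = 1] (mod int N)" if "0 < N" for N
    using cong_trans[OF cong_sym[OF cong_scalar_left[OF SL2hat_set_D(2)[OF g that]]]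
        det_hinv_cong[OF SL2hat_set_D(1)[OF g] that]]
    by simp
  then show "inv\<^bsub>GL2hat\<^esub> g \<in> SL2hat_set"
    using g hinv_GL2hat by (simp add: SL2hat_set_def inv_GL2hat)
next
  fix g h assume g: "g \<in> SL2hat_set" and h: "h \<in> SL2hat_set"
  have "[det (hmul g h N) = 1] (mod int N)" if "0 < N" for N
    using det_hmul_cong[OF that, of g h] cong_mult[OF SL2hat_set_D(2)[OF g that] SL2hat_set_D(2)[OF h that]]
    by (metis cong_trans mult_1)
  then show "g \<otimes>\<^bsub>GL2hat\<^esub> h \<in> SL2hat_set"
    using g h hmul_GL2hat by (simp add: SL2hat_set_def)
qed (auto simp: SL2hat_set_def)

lemma SL2hat_simps [simp]:
  "carrier SL2hat = SL2hat_set" "mult SL2hat = hmul" "one SL2hat = hone"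
  by (simp_all add: SL2hat_def)

lemma SL2hat_eq: "SL2hat = GL2hat\<lparr>carrier := SL2hat_set\<rparr>"
  by (simp add: SL2hat_def GL2hat_def)

lemma group_SL2hat: "group SL2hat"
  unfolding SL2hat_eq by (rule group.subgroup_imp_group[OF group_GL2hat subgroup_SL2hat])

lemma GL2hat_eq: "GL2hat = GL2hat\<lparr>carrier := GL2hat_set\<rparr>"
  by (simp add: GL2hat_def)

section \<open>Subgroups defined at level N\<close>

lemma finite_range_red: "0 < N \<Longrightarrow> finite (range (red N))"
proof -
  assume N: "0 < N"
  let ?entries = "\<lambda>A::m2. (A$1$1, A$1$2, A$2$1, A$2$2)"
  have "?entries ` range (red N) \<subseteq> {0..<int N} \<times> {0..<int N} \<times> {0..<int N} \<times> {0..<int N}"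
    using N by auto
  then have "finite (?entries ` range (red N))"
    by (rule finite_subset) blast
  moreover have "inj ?entries"
    by (rule injI) (simp add: m2_eq_iff)
  ultimately show ?thesis
    by (simp add: finite_image_iff inj_on_subset)
qed

locale level_condition =
  fixes N :: nat and P :: "m2 \<Rightarrow> bool"
  assumes level_pos: "0 < N"
    and P_one: "P (red N (mat 1))"
    and P_mult: "\<And>A B. P (red N A) \<Longrightarrow> P (red N B) \<Longrightarrow> P (red N (A ** B))"
    and P_inverse: "\<And>A u. P (red N A) \<Longrightarrow> [det A * u = 1] (mod int N) \<Longrightarrow> P (red N (mat u ** adjugate A))"
begin

lemma P_level: "g \<in> GL2hat_set \<Longrightarrow> P (g N) \<longleftrightarrow> P (red N (g N))"
  using Mhat_red[OF GL2hat_set_D(1) level_pos] by simp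

lemma subgroup_level: "subgroup {g \<in> GL2hat_set. P (g N)} GL2hat"
proof (rule group.subgroupI[OF group_GL2hat])
  show "{g \<in> GL2hat_set. P (g N)} \<noteq> {}"
    using hone_GL2hat P_one level_pos by (auto simp: hone_level)
next
  fix g assume g: "g \<in> {g \<in> GL2hat_set. P (g N)}"
  then have "P (red N (mat (inverse_mod (det (g N)) N) ** adjugate (g N)))"
    using P_inverse mult_inverse_mod_cong[OF GL2hat_set_D(2)[OF _ level_pos]] P_level by blast
  moreover have "hinv g N = red N (mat (inverse_mod (det (g N)) N) ** adjugate (g N))"
    using level_pos by (simp add: hinv_def)
  ultimately show "inv\<^bsub>GL2hat\<^esub> g \<in> {g \<in> GL2hat_set. P (g N)}"
    using g by (simp add: inv_GL2hat hinv_GL2hat)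
next
  fix g h assume g: "g \<in> {g \<in> GL2hat_set. P (g N)}" and h: "h \<in> {g \<in> GL2hat_set. P (g N)}"
  then have "P (red N (g N ** h N))"
    using P_mult P_level by blast
  then show "g \<otimes>\<^bsub>GL2hat\<^esub> h \<in> {g \<in> GL2hat_set. P (g N)}"
    using g h level_pos by (simp add: hmul_GL2hat hmul_level)
qed auto

lemma subgroup_level_Int:
  assumes "subgroup S GL2hat"
  shows "subgroup ({g \<in> GL2hat_set. P (g N)} \<inter> S) (GL2hat\<lparr>carrier := S\<rparr>)"
  using group.subgroup_incl[OF group_GL2hat]
    group.subgroups_Inter_pair[OF group_GL2hat subgroup_level assms] assms
  by blast

lemma finite_rcosets_level_Int:
  assumes S: "subgroup S GL2hat"
  shows "finite (rcosets\<^bsub>GL2hat\<lparr>carrier := S\<rparr>\<^esub> ({g \<in> GL2hat_set. P (g N)} \<inter> S))"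
proof -
  interpret S: group "GL2hat\<lparr>carrier := S\<rparr>"
    by (rule group.subgroup_imp_group[OF group_GL2hat S])
  have SGL: "S \<subseteq> GL2hat_set"
    using subgroup.subset[OF S] by simp
  show ?thesis
  proof (rule S.finite_rcosets_if_fibres_in[where f = "\<lambda>g. g N"])
    show "subgroup ({g \<in> GL2hat_set. P (g N)} \<inter> S) (GL2hat\<lparr>carrier := S\<rparr>)"
      by (rule subgroup_level_Int[OF S])
    have "g N \<in> range (red N)" if "g \<in> S" for g
      using Mhat_red[OF GL2hat_set_D(1)[OF subsetD[OF SGL that]] level_pos] by (metis rangeI)
    then have "(\<lambda>g. g N) ` S \<subseteq> range (red N)"
      by blast
    then show "finite ((\<lambda>g. g N) ` carrier (GL2hat\<lparr>carrier := S\<rparr>))"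
      using finite_range_red[OF level_pos] finite_subset by auto
  next
    fix x y assume x: "x \<in> carrier (GL2hat\<lparr>carrier := S\<rparr>)" and y: "y \<in> carrier (GL2hat\<lparr>carrier := S\<rparr>)"
      and xy: "x N = y N"
    have "x \<otimes>\<^bsub>GL2hat\<lparr>carrier := S\<rparr>\<^esub> inv\<^bsub>GL2hat\<lparr>carrier := S\<rparr>\<^esub> y \<in> S"
      using S.m_closed[OF x S.inv_closed[OF y]] by simp
    moreover have "x \<otimes>\<^bsub>GL2hat\<lparr>carrier := S\<rparr>\<^esub> inv\<^bsub>GL2hat\<lparr>carrier := S\<rparr>\<^esub> y = hmul x (hinv y)"
      using y SGL group.m_inv_consistent[OF group_GL2hat S] by (auto simp: inv_GL2hat)
    moreover have "hmul x (hinv y) N = red N (mat 1)"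
      using hmul_hinv_level_eq[of x y N] level_pos xy x y SGL by (auto simp: hone_level)
    ultimately show "x \<otimes>\<^bsub>GL2hat\<lparr>carrier := S\<rparr>\<^esub> inv\<^bsub>GL2hat\<lparr>carrier := S\<rparr>\<^esub> y
        \<in> {g \<in> GL2hat_set. P (g N)} \<inter> S"
      using SGL P_one by auto
  qed
qed

lemma finite_rcosets_level:
  "finite (rcosets\<^bsub>GL2hat\<^esub> {g \<in> GL2hat_set. P (g N)})"
  using finite_rcosets_level_Int[OF group.subgroup_self[OF group_GL2hat]]
  by (simp flip: GL2hat_eq add: Int_absorb2)

lemma subgroup_level_SL2hat:
  "subgroup ({g \<in> GL2hat_set. P (g N)} \<inter> SL2hat_set) SL2hat"
  unfolding SL2hat_eq by (rule subgroup_level_Int[OF subgroup_SL2hat])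

lemma finite_rcosets_level_SL2hat:
  "finite (rcosets\<^bsub>SL2hat\<^esub> ({g \<in> GL2hat_set. P (g N)} \<inter> SL2hat_set))"
  unfolding SL2hat_eq by (rule finite_rcosets_level_Int[OF subgroup_SL2hat])

end

lemma red_nth_eq_0_iff: "red N A $ i $ j = 0 \<longleftrightarrow> int N dvd A $ i $ j"
  by (simp add: dvd_eq_mod_eq_0)

lemma level_condition_B0: "0 < N \<Longrightarrow> level_condition N (\<lambda>A. A $ 2 $ 1 = 0)"
  by unfold_locales (auto simp: red_nth_eq_0_iff m2_mult_nth)

definition cartan_mod :: "nat \<Rightarrow> m2 \<Rightarrow> m2 \<Rightarrow> bool" where
  "cartan_mod N T A \<longleftrightarrow>
     (\<exists>a b. coprime (det (mat a + mat b ** T)) (int N) \<and> A = red N (mat a + mat b ** T))"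

lemma Cns_eq: "Cns N T = {g \<in> GL2hat_set. cartan_mod N T (g N)}"
  by (simp add: Cns_def cartan_mod_def)

lemma cartan_mult:
  "(mat a + mat b ** T) ** (mat c + mat d ** T)
     = mat (a * c - b * d * det T) + mat (a * d + b * c + b * d * (T$1$1 + T$2$2)) ** (T::m2)"
  by (simp add: m2_eq_iff m2_mult_nth det_2 algebra_simps)

lemma adjugate_cartan: "adjugate (mat a + mat b ** T) = mat (a + b * (T$1$1 + T$2$2)) + mat (- b) ** (T::m2)"
  by (simp add: m2_eq_iff m2_mult_nth algebra_simps)

lemma mat_mult_cartan: "mat u ** (mat a + mat b ** T) = mat (u * a) + mat (u * b) ** (T::m2)"
  by (simp add: m2_eq_iff m2_mult_nth algebra_simps)

lemma det_cartan:
  "det (mat a + mat b ** (T::m2)) = a\<^sup>2 + a * b * (T$1$1 + T$2$2) + b\<^sup>2 * det T"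
  by (simp add: det_2 m2_mult_nth power2_eq_square algebra_simps)

lemma level_condition_Cns:
  assumes N: "0 < N"
  shows "level_condition N (cartan_mod N T)"
proof
  show "cartan_mod N T (red N (mat 1))"
    unfolding cartan_mod_def by (rule exI[of _ 1], rule exI[of _ 0]) simp
next
  fix A B assume "cartan_mod N T (red N A)" "cartan_mod N T (red N B)"
  then obtain a b c d where
    ab: "coprime (det (mat a + mat b ** T)) (int N)" "red N A = red N (mat a + mat b ** T)" and
    cd: "coprime (det (mat c + mat d ** T)) (int N)" "red N B = red N (mat c + mat d ** T)"
    unfolding cartan_mod_def by (metis red_idem)
  have "red N (A ** B) = red N ((mat a + mat b ** T) ** (mat c + mat d ** T))"
    by (metis ab(2) cd(2) red_mult_red_left red_mult_red_right)
  moreover have "coprime (det ((mat a + mat b ** T) ** (mat c + mat d ** T))) (int N)"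
    using ab(1) cd(1) by (simp add: det_mul)
  ultimately show "cartan_mod N T (red N (A ** B))"
    unfolding cartan_mod_def cartan_mult by blast
next
  fix A u assume "cartan_mod N T (red N A)" and u: "[det A * u = 1] (mod int N)"
  then obtain a b where
    ab: "coprime (det (mat a + mat b ** T)) (int N)" "red N A = red N (mat a + mat b ** T)"
    unfolding cartan_mod_def by (metis red_idem)
  let ?X = "mat u ** adjugate (mat a + mat b ** T)"
  have "red N (mat u ** adjugate A) = red N ?X"
    using ab(2) unfolding red_eq_iff_m2_cong by (intro m2_cong_mult m2_cong_refl m2_cong_adjugate)
  moreover have "?X = mat (u * (a + b * (T$1$1 + T$2$2))) + mat (u * - b) ** T"
    by (simp only: adjugate_cartan mat_mult_cartan)
  moreover have "det ?X = u * u * det (mat a + mat b ** T)"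
    by (simp only: det_mul det_adjugate det_mat)
  moreover have "coprime u (int N)"
    using u by (metis coprime_iff_invertible_int mult.commute)
  ultimately show "cartan_mod N T (red N (mat u ** adjugate A))"
    unfolding cartan_mod_def using ab(1) by (metis coprime_mult_left_iff)
qed (rule N)

section \<open>Lifting from level 2^n\<close>

definition two_part :: "nat \<Rightarrow> nat" where
  "two_part M = 2 ^ multiplicity 2 M"

definition odd_part :: "nat \<Rightarrow> nat" where
  "odd_part M = M div two_part M"

text \<open>The level-M component of the idempotent of Zhat = Z_2 \<times> (\<Prod>p odd. Z_p) that is 1 on Z_2
  and 0 on the other factors.\<close>

definition idem_2adic :: "nat \<Rightarrow> nat" where
  "idem_2adic M = odd_part M ^ totient (two_part M)"

lemma two_part_mult_odd_part: "two_part M * odd_part M = M"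
  unfolding odd_part_def two_part_def using multiplicity_dvd[of 2 M] by simp

lemma odd_odd_part: "0 < M \<Longrightarrow> odd (odd_part M)"
  unfolding odd_part_def two_part_def using multiplicity_decompose[of M 2] by simp

lemma coprime_odd_part_two_part: "coprime (odd_part M) (two_part M)"
  using odd_odd_part[of M] by (cases "M = 0") (simp_all add: two_part_def)

lemma two_part_dvd: "N dvd M \<Longrightarrow> 0 < M \<Longrightarrow> two_part N dvd two_part M"
  unfolding two_part_def by (simp add: dvd_imp_multiplicity_le le_imp_power_dvd)

lemma odd_part_dvd: "N dvd M \<Longrightarrow> 0 < M \<Longrightarrow> odd_part N dvd odd_part M"
proof -
  assume "N dvd M" "0 < M"
  then have "odd_part N dvd two_part M * odd_part M"
    using two_part_mult_odd_part[of N] two_part_mult_odd_part[of M] by (metis dvd_mult_right)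
  moreover have "coprime (odd_part N) (two_part M)"
    using odd_odd_part[of N] \<open>N dvd M\<close> \<open>0 < M\<close> by (auto simp: two_part_def)
  ultimately show ?thesis
    by (simp add: coprime_dvd_mult_right_iff)
qed

lemma two_part_power: "two_part (2 ^ n) = 2 ^ n"
  by (simp add: two_part_def multiplicity_same_power)

lemma idem_2adic_cong_1: "[idem_2adic M = 1] (mod two_part M)"
  unfolding idem_2adic_def by (rule euler_theorem[OF coprime_odd_part_two_part])

lemma idem_2adic_cong_0: "[idem_2adic M = 0] (mod odd_part M)"
  unfolding idem_2adic_def cong_0_iff two_part_def by simp

lemma idem_2adic_cong_idem_2adic:
  assumes "N dvd M" "0 < M"
  shows "[idem_2adic M = idem_2adic N] (mod N)"
proof -
  have "[idem_2adic M = idem_2adic N] (mod two_part N)"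
    using cong_dvd_modulus_nat[OF idem_2adic_cong_1[of M] two_part_dvd[OF assms]] idem_2adic_cong_1[of N]
    by (metis cong_sym cong_trans)
  moreover have "[idem_2adic M = idem_2adic N] (mod odd_part N)"
    using cong_dvd_modulus_nat[OF idem_2adic_cong_0[of M] odd_part_dvd[OF assms]] idem_2adic_cong_0[of N]
    by (metis cong_sym cong_trans)
  ultimately have "[idem_2adic M = idem_2adic N] (mod two_part N * odd_part N)"
    using coprime_odd_part_two_part[of N] by (simp add: coprime_cong_mult_nat coprime_commute)
  then show ?thesis
    by (simp only: two_part_mult_odd_part)
qed

definition lift_2adic :: "m2 \<Rightarrow> nat \<Rightarrow> m2" where
  "lift_2adic X = (\<lambda>M. if M = 0 then 0
                   else red M (mat (int (idem_2adic M)) ** X + mat (1 - int (idem_2adic M))))"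

lemma m2_cong_affine:
  "[e = e'] (mod int K) \<Longrightarrow> m2_cong K (mat e ** X + mat (1 - e)) (mat e' ** X + mat (1 - e'))"
  by (intro m2_cong_add m2_cong_mult m2_cong_mat cong_diff m2_cong_refl cong_refl)

lemma coprime_det_affine_idem_2adic:
  fixes X :: m2
  assumes X: "odd (det X)" and M: "0 < M"
  shows "coprime (det (mat (int (idem_2adic M)) ** X + mat (1 - int (idem_2adic M)))) (int M)"
proof -
  let ?W = "mat (int (idem_2adic M)) ** X + mat (1 - int (idem_2adic M))"
  have "[int (idem_2adic M) = 1] (mod int (two_part M))"
    using idem_2adic_cong_1[of M] cong_int_iff[of "idem_2adic M" 1 "two_part M"] by simp
  then have "[det ?W = det X] (mod int (two_part M))"
    using m2_cong_det[OF m2_cong_affine[of _ 1 _ X]] by simp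
  moreover have "coprime (det X) (int (two_part M))"
    using X by (simp add: two_part_def)
  ultimately have "coprime (det ?W) (int (two_part M))"
    using cong_imp_coprime cong_sym by blast
  moreover have "[int (idem_2adic M) = 0] (mod int (odd_part M))"
    using idem_2adic_cong_0[of M] cong_int_iff[of "idem_2adic M" 0 "odd_part M"] by simp
  then have "[det ?W = 1] (mod int (odd_part M))"
    using m2_cong_det[OF m2_cong_affine[of _ 0 _ X]] by simp
  then have "coprime (det ?W) (int (odd_part M))"
    by (rule coprime_if_cong_1)
  ultimately show ?thesis
    by (metis two_part_mult_odd_part coprime_mult_right_iff of_nat_mult)
qed

lemma lift_2adic_GL2hat:
  assumes X: "odd (det X)"
  shows "lift_2adic X \<in> GL2hat_set"
  unfolding GL2hat_set_def
proof (intro CollectI conjI allI impI)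
  show "lift_2adic X \<in> Mhat"
  proof (rule MhatI)
    fix N M :: nat assume NM: "0 < N" "0 < M" "N dvd M"
    have "[int (idem_2adic M) = int (idem_2adic N)] (mod int N)"
      using idem_2adic_cong_idem_2adic[OF NM(3,2)] by (simp add: cong_int_iff)
    then have "red N (mat (int (idem_2adic M)) ** X + mat (1 - int (idem_2adic M)))
        = red N (mat (int (idem_2adic N)) ** X + mat (1 - int (idem_2adic N)))"
      unfolding red_eq_iff_m2_cong by (rule m2_cong_affine)
    then show "red N (lift_2adic X M) = lift_2adic X N"
      using NM by (simp add: lift_2adic_def red_red_dvd)
  qed (simp add: lift_2adic_def)
next
  fix M :: nat assume M: "0 < M"
  then show "coprime (det (lift_2adic X M)) (int M)"
    using coprime_det_affine_idem_2adic[OF X M] det_red_cong cong_imp_coprime cong_sym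
    by (simp add: lift_2adic_def) blast
qed

lemma lift_2adic_power: "lift_2adic X (2 ^ n) = red (2 ^ n) X"
proof -
  have "[int (idem_2adic (2 ^ n)) = 1] (mod int (2 ^ n))"
    using idem_2adic_cong_1[of "2 ^ n"] cong_int_iff[of "idem_2adic (2 ^ n)" 1 "2 ^ n"]
    by (simp add: two_part_power)
  then show ?thesis
    unfolding lift_2adic_def using m2_cong_affine[of _ 1 "2 ^ n" X] by (simp add: red_eq_iff_m2_cong)
qed

section \<open>Consequences of the inertness of 2\<close>

lemma inert_at_2_odd_det:
  "inert_at 2 T \<Longrightarrow> odd a \<or> odd b \<Longrightarrow> odd (det (mat a + mat b ** T))"
  unfolding inert_at_def by auto

lemma inert_at_2_odd:
  fixes T :: m2
  assumes "inert_at 2 T"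
  shows "odd (det T)" "odd (T$1$1 + T$2$2)" "odd (T$2$1)"
proof -
  show det: "odd (det T)"
    using inert_at_2_odd_det[OF assms, of 0 1] by (simp add: det_cartan)
  have "det (mat 1 + mat 1 ** T) = 1 + (T$1$1 + T$2$2) + det T"
    using det_cartan[of 1 1 T] by (simp only: power_one mult_1)
  then have "odd (1 + (T$1$1 + T$2$2) + det T)"
    using inert_at_2_odd_det[OF assms, of 1 1] by simp
  then show tr: "odd (T$1$1 + T$2$2)"
    using det by presburger
  show "odd (T$2$1)"
    using det tr by (auto simp: det_2)
qed

lemma cartan_det_1_mod_4:
  fixes T :: m2
  assumes T: "inert_at 2 T" and det: "[det (mat a + mat b ** T) = 1] (mod 4)"
  shows "\<not> 4 dvd b * T$2$1 + 2 * (a + b * T$2$2)"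
proof
  assume 4: "4 dvd b * T$2$1 + 2 * (a + b * T$2$2)"
  have "even (b * T$2$1)"
    using dvd_trans[OF _ 4, of 2] by simp
  then obtain c where b: "b = 2 * c"
    using inert_at_2_odd(3)[OF T] by auto
  have "4 dvd 2 * (c * T$2$1 + a + 2 * c * T$2$2)"
    using 4 unfolding b by (simp add: algebra_simps)
  moreover have "4 dvd 2 * z \<Longrightarrow> even z" for z :: int
    by presburger
  ultimately have even_ca: "even (c * T$2$1 + a)"
    by fastforce
  have "odd (det (mat a + mat b ** T))"
    using cong_dvd_modulus[OF det, of 2] by (auto simp: cong_iff_dvd_diff)
  moreover have "det (mat a + mat b ** T) = a * a + 2 * (a * c * (T$1$1 + T$2$2) + 2 * c * c * det T)"
    unfolding det_cartan b by (simp add: power2_eq_square algebra_simps)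
  ultimately have "odd a"
    by simp
  then have "odd c"
    using even_ca inert_at_2_odd(3)[OF T] by auto
  obtain k l s where "a = 2 * k + 1" "c = 2 * l + 1" "T$1$1 + T$2$2 = 2 * s + 1"
    using \<open>odd a\<close> \<open>odd c\<close> inert_at_2_odd(2)[OF T] by (metis oddE)
  then have "det (mat a + mat b ** T)
      = 4 * (k\<^sup>2 + 2 * k + s * a * c + 2 * k * l + l + c\<^sup>2 * det T) + 3"
    unfolding det_cartan b by (simp add: power2_eq_square algebra_simps)
  moreover have "\<not> [4 * q + 3 = 1] (mod 4)" for q :: int
    unfolding cong_def by presburger
  ultimately show False
    using det by metis
qed

section \<open>Independence in GL2 and its failure in SL2\<close>

lemma exists_Cns_mult_in_B0:
  assumes n: "n \<ge> 1" and T: "inert_at 2 T" and g: "g \<in> GL2hat_set"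
  shows "\<exists>c \<in> Cns (2 ^ n) T. hmul c g \<in> B0 (2 ^ n)"
proof -
  let ?N = "2 ^ n :: nat"
  have coprime_N: "coprime x (int ?N) \<longleftrightarrow> odd x" for x :: int
    using n by simp
  define p q where "p = g ?N $ 1 $ 1" and "q = g ?N $ 2 $ 1"
  have "odd (det (g ?N))"
    using GL2hat_set_D(2)[OF g, of ?N] coprime_N by simp
  then have "odd p \<or> odd q"
    unfolding p_def q_def det_2 by auto
  define X where "X = mat (- T$2$1 * p - T$2$2 * q) + mat q ** T"
  \<comment> \<open>the second row of X is T21 * (q, -p), which kills the first column (p, q) of g\<close>
  have "(X ** g ?N) $ 2 $ 1 = 0"
    by (simp add: X_def p_def q_def m2_mult_nth algebra_simps)
  have "odd (- T$2$1 * p - T$2$2 * q) \<or> odd q"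
    using \<open>odd p \<or> odd q\<close> inert_at_2_odd(3)[OF T] by auto
  then have odd_X: "odd (det X)"
    unfolding X_def by (rule inert_at_2_odd_det[OF T])
  let ?c = "lift_2adic X"
  have c: "?c \<in> GL2hat_set" "?c ?N = red ?N X"
    using lift_2adic_GL2hat[OF odd_X] lift_2adic_power by auto
  then have "?c \<in> Cns ?N T"
    using odd_X coprime_N unfolding Cns_def X_def by blast
  moreover have "hmul ?c g ?N = red ?N (X ** g ?N)"
    using c by (simp add: hmul_level red_mult_red_left)
  then have "hmul ?c g \<in> B0 ?N"
    using \<open>(X ** g ?N) $ 2 $ 1 = 0\<close> hmul_GL2hat[OF c(1) g] by (simp add: B0_def)
  ultimately show ?thesis
    by blast
qed

definition hconst :: "m2 \<Rightarrow> nat \<Rightarrow> m2" where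
  "hconst Y = (\<lambda>M. if M = 0 then 0 else red M Y)"

lemma hconst_SL2hat:
  assumes "det Y = 1"
  shows "hconst Y \<in> SL2hat_set"
proof -
  have "hconst Y \<in> Mhat"
    by (rule MhatI) (auto simp: hconst_def red_red_dvd)
  moreover have "[det (hconst Y M) = 1] (mod int M)" if "0 < M" for M
    using det_red_cong[of M Y] that assms by (simp add: hconst_def)
  ultimately show ?thesis
    unfolding SL2hat_set_def GL2hat_set_def using coprime_if_cong_1 by auto
qed

lemma Cns_SL2hat_mult_not_in_B0:
  fixes T :: m2
  defines "Y \<equiv> vector [vector [1, 0], vector [2, 1]] :: m2"
  assumes n: "n \<ge> 2" and T: "inert_at 2 T" and c: "c \<in> Cns (2 ^ n) T \<inter> SL2hat_set"
  shows "hmul c (hconst Y) \<notin> B0 (2 ^ n)"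
proof
  let ?N = "2 ^ n :: nat"
  assume "hmul c (hconst Y) \<in> B0 ?N"
  obtain a b where ab: "c ?N = red ?N (mat a + mat b ** T)"
    using c unfolding Cns_def by blast
  let ?X = "mat a + mat b ** T"
  have 4: "4 dvd int ?N"
    using n by (simp add: le_imp_power_dvd[of 2 n 2, simplified])
  have "[det ?X = det (c ?N)] (mod int ?N)"
    using det_red_cong[of ?N ?X] ab by (simp add: cong_sym)
  also have "[det (c ?N) = 1] (mod int ?N)"
    using SL2hat_set_D(2)[of c ?N] c by simp
  finally have "[det ?X = 1] (mod 4)"
    using 4 cong_dvd_modulus by blast
  have "hmul c (hconst Y) ?N = red ?N (?X ** Y)"
    using ab by (simp add: hmul_level hconst_def red_mult_red_left red_mult_red_right)
  then have "int ?N dvd (?X ** Y) $ 2 $ 1"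
    using \<open>hmul c (hconst Y) \<in> B0 ?N\<close> by (simp add: B0_def dvd_eq_mod_eq_0)
  moreover have "(?X ** Y) $ 2 $ 1 = b * T$2$1 + 2 * (a + b * T$2$2)"
    by (simp add: Y_def m2_mult_nth)
  ultimately have "4 dvd b * T$2$1 + 2 * (a + b * T$2$2)"
    using 4 dvd_trans by metis
  then show False
    using cartan_det_1_mod_4[OF T \<open>[det ?X = 1] (mod 4)\<close>] by blast
qed

lemma index_B0_Cns_GL2hat:
  assumes n: "n \<ge> 1" and T: "inert_at 2 T"
  shows "subgroup_index GL2hat (B0 (2 ^ n) \<inter> Cns (2 ^ n) T)
           = subgroup_index GL2hat (B0 (2 ^ n)) * subgroup_index GL2hat (Cns (2 ^ n) T)"
proof -
  let ?N = "2 ^ n :: nat"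
  interpret B: level_condition ?N "\<lambda>A. A $ 2 $ 1 = 0"
    by (rule level_condition_B0) simp
  interpret C: level_condition ?N "cartan_mod ?N T"
    by (rule level_condition_Cns) simp
  have "{g \<in> GL2hat_set. g ?N $ 2 $ 1 = 0} = B0 ?N" "{g \<in> GL2hat_set. cartan_mod ?N T (g ?N)} = Cns ?N T"
    by (simp_all add: B0_def Cns_eq)
  then show ?thesis
    using group.card_rcosets_Int_eq_mult_iff[OF group_GL2hat B.subgroup_level C.subgroup_level
        B.finite_rcosets_level C.finite_rcosets_level]
      exists_Cns_mult_in_B0[OF n T]
    by (simp add: subgroup_index_def)
qed

lemma index_B0_Cns_SL2hat:
  assumes n: "n \<ge> 2" and T: "inert_at 2 T"
  shows "subgroup_index SL2hat (B0 (2 ^ n) \<inter> Cns (2 ^ n) T \<inter> SL2hat_set)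
           \<noteq> subgroup_index SL2hat (B0 (2 ^ n) \<inter> SL2hat_set)
              * subgroup_index SL2hat (Cns (2 ^ n) T \<inter> SL2hat_set)"
proof -
  let ?N = "2 ^ n :: nat" and ?Y = "vector [vector [1, 0], vector [2, 1]] :: m2"
  interpret B: level_condition ?N "\<lambda>A. A $ 2 $ 1 = 0"
    by (rule level_condition_B0) simp
  interpret C: level_condition ?N "cartan_mod ?N T"
    by (rule level_condition_Cns) simp
  have sets: "{g \<in> GL2hat_set. g ?N $ 2 $ 1 = 0} = B0 ?N"
    "{g \<in> GL2hat_set. cartan_mod ?N T (g ?N)} = Cns ?N T"
    "B0 ?N \<inter> Cns ?N T \<inter> SL2hat_set = (B0 ?N \<inter> SL2hat_set) \<inter> (Cns ?N T \<inter> SL2hat_set)"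
    by (auto simp: B0_def Cns_eq)
  have "hconst ?Y \<in> SL2hat_set"
    by (rule hconst_SL2hat) (simp add: det_2)
  then have "\<not> (\<forall>g \<in> SL2hat_set. \<exists>c \<in> Cns ?N T \<inter> SL2hat_set. hmul c g \<in> B0 ?N \<inter> SL2hat_set)"
    using Cns_SL2hat_mult_not_in_B0[OF n T] by fastforce
  then show ?thesis
    using group.card_rcosets_Int_eq_mult_iff[OF group_SL2hat B.subgroup_level_SL2hat
        C.subgroup_level_SL2hat B.finite_rcosets_level_SL2hat C.finite_rcosets_level_SL2hat]
    by (simp add: subgroup_index_def sets)
qed

theorem mainTheorem2:
  fixes n :: nat and T :: "int^2^2"
  assumes "n \<ge> 1"
    and "imag_quad_optimal T"
    and "\<forall>p. prime p \<and> p dvd int (2^n) \<longrightarrow> inert_at p T"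
  shows "subgroup_index GL2hat (B0 (2^n) \<inter> Cns (2^n) T)
           = subgroup_index GL2hat (B0 (2^n)) * subgroup_index GL2hat (Cns (2^n) T)
         \<and> (n > 1 \<longrightarrow>
            subgroup_index SL2hat (B0 (2^n) \<inter> Cns (2^n) T \<inter> SL2hat_set)
              \<noteq> subgroup_index SL2hat (B0 (2^n) \<inter> SL2hat_set)
                 * subgroup_index SL2hat (Cns (2^n) T \<inter> SL2hat_set))"
proof -
  have "inert_at 2 T"
    using assms(1,3) by (simp add: dvd_power)
  then show ?thesis
    using index_B0_Cns_GL2hat[OF assms(1)] index_B0_Cns_SL2hat[of n T] by simp
qed

end
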